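(* Let $\ell$ be a label and $\rho_1,\rho_{21},\rho_{22}$ rows such that $\rho_{21}\odot\rho_{22}$ is defined. If $\rho_1 \simeq \rho_{21}\odot\rho_{22}$, $\rho_1$ ends with $\star$, and $\ell\notin\mathit{dom}(\rho_1)$, then $\rho_1 \simeq \rho_{21}\odot(\ell{:}A;\cdot)\odot\rho_{22}$ for every type $A$.
   Context: Types and rows share one grammar: $A,B,C,\rho ::= X \mid \alpha \mid \star \mid \iota \mid A\to B \mid \forall X{:}K.\,A \mid [\rho] \mid \langle\rho\rangle \mid \cdot \mid \ell{:}A;\rho$, where $X$ ranges over type variables (bound by $\forall$), $\alpha$ over type names, $\star$ is the dynamic type (also serving as the dynamic row), $\iota$ over base types, $[\rho]$ and $\langle\rho\rangle$ are record and variant types, $\cdot$ is the empty row, $\ell$ ranges over labels, and $K\in\{\mathsf T,\mathsf R\}$ is a kind. Types are identified up to renaming of bound variables; $\mathit{ftv}(A)$ is the set of free type variables. Row matching $\rho \triangleright_\ell A,\rho'$ is defined by: $(\ell{:}A;\rho)\triangleright_\ell A,\rho$; if $\ell'\neq\ell$ and $\rho\triangleright_\ell A,\rho'$ then $(\ell'{:}B;\rho)\triangleright_\ell A,(\ell'{:}B;\rho')$; and $\star\triangleright_\ell \star,\star$. $\mathbf{QPoly}(A)$ holds iff $A$ is not of the form $\forall X{:}K.\,B$ and $\star$ occurs in $A$. Row concatenation $\rho_1\odot\rho_2$ is defined only when $\rho_1=\ell_1{:}A_1;\dots;\ell_n{:}A_n;\cdot$, and then equals $\ell_1{:}A_1;\dots;\ell_n{:}A_n;\rho_2$.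 $\mathit{dom}(\rho)$ is the set of labels in the top-level label prefix of $\rho$. A row $\rho$ ends with $\star$ if $\rho=\rho'\odot\star$ for some $\rho'$. Consistency $\simeq$ is defined inductively: $A\simeq A$; $\star\simeq A$; $A\simeq\star$; $A_1\to A_2\simeq B_1\to B_2$ if $A_1\simeq B_1$ and $A_2\simeq B_2$; $\forall X{:}K.A\simeq\forall X{:}K.B$ if $A\simeq B$; $\forall X{:}K.A\simeq B$ if $\mathbf{QPoly}(B)$, $X\notin\mathit{ftv}(B)$ and $A\simeq B$; $A\simeq\forall X{:}K.B$ if $\mathbf{QPoly}(A)$, $X\notin\mathit{ftv}(A)$ and $A\simeq B$; $[\rho_1]\simeq[\rho_2]$ and $\langle\rho_1\rangle\simeq\langle\rho_2\rangle$ if $\rho_1\simeq\rho_2$; $\ell{:}A;\rho_1\simeq B$ if $B\triangleright_\ell B',\rho_2$, $A\simeq B'$ and $\rho_1\simeq\rho_2$; $A\simeq \ell{:}B;\rho_2$ if $A\triangleright_\ell A',\rho_1$, $A'\simeq B$ and $\rho_1\simeq\rho_2$. *)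

theory Defs
  imports Main
begin

datatype kind = KT | KR

type_synonym label = string

(* Types and rows share one grammar. Type variables X use de Bruijn indices
   (bound by Forall), so types are identified up to alpha-renaming. *)
datatype ty =
    TVar nat
  | TName string
  | Star                     (* dynamic type / dynamic row *)
  | Base string
  | Arr ty ty
  | Forall kind ty           (* forall X:K. A  (X is index 0 in the body) *)
  | Record ty
  | Variant ty
  | Empty
  | RCons label ty ty

fun shift :: "nat \<Rightarrow> ty \<Rightarrow> ty" where
  "shift c (TVar n) = (if n < c then TVar n else TVar (Suc n))"
| "shift c (TName a) = TName a"
| "shift c Star = Star"
| "shift c (Base i) = Base i"
| "shift c (Arr A B) = Arr (shift c A) (shift c B)"
| "shift c (Forall K A) = Forall K (shift (Suc c) A)"
| "shift c (Record r) = Record (shift c r)"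
| "shift c (Variant r) = Variant (shift c r)"
| "shift c Empty = Empty"
| "shift c (RCons l A r) = RCons l (shift c A) (shift c r)"

fun star_occurs :: "ty \<Rightarrow> bool" where
  "star_occurs Star = True"
| "star_occurs (Arr A B) = (star_occurs A \<or> star_occurs B)"
| "star_occurs (Forall K A) = star_occurs A"
| "star_occurs (Record r) = star_occurs r"
| "star_occurs (Variant r) = star_occurs r"
| "star_occurs (RCons l A r) = (star_occurs A \<or> star_occurs r)"
| "star_occurs _ = False"

definition QPoly :: "ty \<Rightarrow> bool" where
  "QPoly A \<longleftrightarrow> (\<forall>K B. A \<noteq> Forall K B) \<and> star_occurs A"

inductive row_match :: "ty \<Rightarrow> label \<Rightarrow> ty \<Rightarrow> ty \<Rightarrow> bool" where
  rm_head: "row_match (RCons l A r) l A r"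
| rm_tail: "l' \<noteq> l \<Longrightarrow> row_match r l A r' \<Longrightarrow> row_match (RCons l' B r) l A (RCons l' B r')"
| rm_star: "row_match Star l Star Star"

(* consistency; the side condition X \<notin> ftv(B) is built into de Bruijn:
   B is compared with the body A under the binder after shifting. *)
inductive consistent :: "ty \<Rightarrow> ty \<Rightarrow> bool" (infix "\<simeq>" 50) where
  c_refl: "A \<simeq> A"
| c_starL: "Star \<simeq> A"
| c_starR: "A \<simeq> Star"
| c_arr: "A1 \<simeq> B1 \<Longrightarrow> A2 \<simeq> B2 \<Longrightarrow> Arr A1 A2 \<simeq> Arr B1 B2"
| c_all: "A \<simeq> B \<Longrightarrow> Forall K A \<simeq> Forall K B"
| c_allL: "QPoly B \<Longrightarrow> A \<simeq> shift 0 B \<Longrightarrow> Forall K A \<simeq> B"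
| c_allR: "QPoly A \<Longrightarrow> shift 0 A \<simeq> B \<Longrightarrow> A \<simeq> Forall K B"
| c_rec: "r1 \<simeq> r2 \<Longrightarrow> Record r1 \<simeq> Record r2"
| c_var: "r1 \<simeq> r2 \<Longrightarrow> Variant r1 \<simeq> Variant r2"
| c_rowL: "row_match B l B' r2 \<Longrightarrow> A \<simeq> B' \<Longrightarrow> r1 \<simeq> r2 \<Longrightarrow> RCons l A r1 \<simeq> B"
| c_rowR: "row_match A l A' r1 \<Longrightarrow> A' \<simeq> B \<Longrightarrow> r1 \<simeq> r2 \<Longrightarrow> A \<simeq> RCons l B r2"

(* rho = l1:A1;...;ln:An;.  (the rows for which rho \<odot> rho2 is defined) *)
fun closed_row :: "ty \<Rightarrow> bool" where
  "closed_row Empty = True"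
| "closed_row (RCons l A r) = closed_row r"
| "closed_row _ = False"

(* row concatenation; only meaningful when the first argument is closed_row *)
fun row_concat :: "ty \<Rightarrow> ty \<Rightarrow> ty" (infixr "\<odot>" 65) where
  "row_concat Empty r2 = r2"
| "row_concat (RCons l A r) r2 = RCons l A (row_concat r r2)"
| "row_concat r r2 = undefined"

fun row_dom :: "ty \<Rightarrow> label set" where
  "row_dom (RCons l A r) = insert l (row_dom r)"
| "row_dom _ = {}"

definition ends_with_star :: "ty \<Rightarrow> bool" where
  "ends_with_star r \<longleftrightarrow> (\<exists>r'. closed_row r' \<and> r = r' \<odot> Star)"

end

theory Submission
  imports Defs
begin

text \<open>Since \<open>\<rho>1\<close> ends with \<open>\<star>\<close> and \<open>l \<notin> dom \<rho>1\<close>, the row \<open>\<rho>1\<close> matches \<open>l\<close> against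
  its dynamic tail: \<open>\<rho>1 \<triangleright>\<^sub>l \<star>, \<rho>1\<close>. Hence a new field \<open>l:A\<close> at the head of the right-hand
  row is always absorbed, i.e. \<open>\<rho>1 \<simeq> \<rho>\<close> implies \<open>\<rho>1 \<simeq> l:A;\<rho>\<close>. Deeper insertion points are
  reached by induction on the derivation of \<open>\<rho>1 \<simeq> \<rho>21 \<odot> \<rho>22\<close>: the row rules strip
  matching fields from both sides, row matching on a label other than \<open>l\<close> commutes with
  inserting \<open>l:A\<close>, and the remaining left row still ends with \<open>\<star>\<close> and avoids \<open>l\<close>.\<close>

fun open_row :: "ty \<Rightarrow> bool" where
  "open_row Star = True"
| "open_row (RCons l A r) = open_row r"
| "open_row _ = False"

lemma ends_with_star_iff_open_row: "ends_with_star r \<longleftrightarrow> open_row r"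
proof
  assume "ends_with_star r"
  then obtain r' where "closed_row r'" "r = r' \<odot> Star"
    unfolding ends_with_star_def by blast
  then show "open_row r"
    by (induction r' arbitrary: r rule: closed_row.induct) auto
next
  assume "open_row r"
  then show "ends_with_star r"
    unfolding ends_with_star_def
  proof (induction r rule: open_row.induct)
    case 1
    show ?case by (intro exI[of _ Empty]) simp
  next
    case (2 l A r)
    then obtain r' where "closed_row r'" "r = r' \<odot> Star" by auto
    then show ?case by (intro exI[of _ "RCons l A r'"]) simp
  qed auto
qed

lemma row_match_open_row_absent:
  "open_row r \<Longrightarrow> l \<notin> row_dom r \<Longrightarrow> row_match r l Star r"
  by (induction r rule: open_row.induct) (auto intro: row_match.intros)

lemma row_match_open_row: "row_match r l A r' \<Longrightarrow> open_row r \<Longrightarrow> open_row r'"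
  by (induction rule: row_match.induct) auto

lemma row_match_row_dom_subset: "row_match r l A r' \<Longrightarrow> row_dom r' \<subseteq> row_dom r"
  by (induction rule: row_match.induct) auto

lemma consistent_RCons_right_absent:
  assumes "open_row r1" "l \<notin> row_dom r1" "r1 \<simeq> r"
  shows "r1 \<simeq> RCons l A r"
  using row_match_open_row_absent[OF assms(1,2)] c_starL assms(3) by (rule c_rowR)

lemma consistent_concat_insert_refl:
  "closed_row r21 \<Longrightarrow> open_row (r21 \<odot> r22) \<Longrightarrow> l \<notin> row_dom (r21 \<odot> r22)
    \<Longrightarrow> r21 \<odot> r22 \<simeq> r21 \<odot> RCons l A r22"
proof (induction r21 rule: closed_row.induct)
  case 1
  then show ?case by (auto intro: consistent_RCons_right_absent c_refl)
next
  case (2 l' B r)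
  then show ?case by (auto intro: c_rowL[OF rm_head c_refl])
qed auto

lemma row_match_concat_insert:
  assumes "closed_row r21" "row_match (r21 \<odot> r22) l' B r" "l' \<noteq> l"
  shows "\<exists>ra rb. closed_row ra \<and> r = ra \<odot> rb \<and>
    row_match (r21 \<odot> RCons l A r22) l' B (ra \<odot> RCons l A rb)"
  using assms
proof (induction r21 arbitrary: r rule: closed_row.induct)
  case 1
  then show ?case by (intro exI[of _ Empty] exI[of _ r]) (auto intro: rm_tail)
next
  case (2 l'' C r21')
  from "2.prems"(2) show ?case
  proof (cases rule: row_match.cases)
    case rm_head
    then show ?thesis
      using "2.prems"(1) by (intro exI[of _ r21'] exI[of _ r22]) (auto intro: row_match.rm_head)
  next
    case (rm_tail _ _ r')
    then obtain ra rb where "closed_row ra" "r' = ra \<odot> rb"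
      "row_match (r21' \<odot> RCons l A r22) l' B (ra \<odot> RCons l A rb)"
      using "2.IH" "2.prems" by fastforce
    then show ?thesis
      using rm_tail by (intro exI[of _ "RCons l'' C ra"] exI[of _ rb]) (auto intro: row_match.rm_tail)
  qed auto
qed auto

lemma consistent_concat_insert:
  assumes "r1 \<simeq> R" "open_row r1" "l \<notin> row_dom r1" "closed_row r21" "R = r21 \<odot> r22"
  shows "r1 \<simeq> r21 \<odot> RCons l A r22"
  using assms
proof (induction arbitrary: r21 r22 rule: consistent.induct)
  case (c_refl X)
  then show ?case using consistent_concat_insert_refl by auto
next
  case (c_starL X)
  show ?case by (rule consistent.c_starL)
next
  case (c_starR X)
  then show ?case
    by (cases r21) (auto intro: consistent_RCons_right_absent consistent.c_starR)
next
  case (c_allR X Y K)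
  then have "X \<simeq> Forall K Y" by (blast intro: consistent.c_allR)
  then show ?case
    using c_allR.prems by (cases r21) (auto intro: consistent_RCons_right_absent)
next
  case (c_rowL R' l' B' r2 X r1)
  have "l' \<noteq> l" using c_rowL.prems(2) by auto
  then obtain ra rb where "closed_row ra" "r2 = ra \<odot> rb"
    "row_match (r21 \<odot> RCons l A r22) l' B' (ra \<odot> RCons l A rb)"
    using row_match_concat_insert c_rowL.hyps(1) c_rowL.prems(3,4) by blast
  then show ?case using c_rowL by (auto intro: consistent.c_rowL)
next
  case (c_rowR X l' X' r1 B r2)
  show ?case
  proof (cases r21)
    case Empty
    then show ?thesis
      using c_rowR by (auto intro: consistent_RCons_right_absent consistent.c_rowR)
  next
    case (RCons l'' C r21')
    have "open_row r1" "l \<notin> row_dom r1"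
      using c_rowR.hyps(1) c_rowR.prems(1,2)
      by (auto dest: row_match_open_row row_match_row_dom_subset)
    then have "r1 \<simeq> r21' \<odot> RCons l A r22"
      using c_rowR.IH(2) c_rowR.prems(3,4) RCons by simp
    then show ?thesis using c_rowR RCons by (auto intro: consistent.c_rowR)
  qed (use c_rowR in auto)
qed auto

theorem mainTheorem11:
  fixes l :: label and \<rho>1 \<rho>21 \<rho>22 A :: ty
  assumes "closed_row \<rho>21"
    and "\<rho>1 \<simeq> \<rho>21 \<odot> \<rho>22"
    and "ends_with_star \<rho>1"
    and "l \<notin> row_dom \<rho>1"
  shows "\<rho>1 \<simeq> \<rho>21 \<odot> (RCons l A Empty) \<odot> \<rho>22"
proof -
  have "open_row \<rho>1" using assms(3) by (simp add: ends_with_star_iff_open_row)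
  then have "\<rho>1 \<simeq> \<rho>21 \<odot> RCons l A \<rho>22"
    using consistent_concat_insert assms(1,2,4) by blast
  then show ?thesis by simp
qed

end
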